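(* Let $\ell\in\{\tfrac12,1,\tfrac32,\dots\}$ and write $n=2\ell$. For $\rho\in\mathbb{C}$ put $q=e^{i\pi\rho}$ and $$A^{\ell}_{n}(q)=\prod_{k=1}^{n}\frac{(1-q^{2k})\big(q^{2(\ell-k+1)}-q^{-2\ell}\big)}{1-q^2}.$$ Then, as an identity of meromorphic functions of $\rho$, $$\frac{A^{\ell}_{2\ell}(q)}{(2\ell)!}\,S_{2\ell}\big(1-2\ell\rho,\;2\rho-1,\;\rho\big)=\frac{(2\pi i)^{2\ell}}{(2\ell)!}\prod_{k=1}^{2\ell}\frac{\Gamma\big((k+1)\rho-1\big)\,\Gamma(-\rho)}{\Gamma(k\rho)^2\,\Gamma(-k\rho)} .$$
   Context: $S_n(\alpha,\beta,\gamma)$ denotes the (analytically continued) Selberg integral, i.e. the meromorphic function $$S_n(\alpha,\beta,\gamma)=\prod_{j=0}^{n-1}\frac{\Gamma(\alpha+j\gamma)\,\Gamma(\beta+j\gamma)\,\Gamma(1+(j+1)\gamma)}{\Gamma(\alpha+\beta+(n+j-1)\gamma)\,\Gamma(1+\gamma)},$$ which equals $\int_{[0,1]^n}\prod_i t_i^{\alpha-1}(1-t_i)^{\beta-1}\prod_{i<j}|t_i-t_j|^{2\gamma}\,dt$ where that integral converges. *)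

theory Defs
  imports "HOL-Analysis.Analysis"
begin

text \<open>Analytically continued Selberg integral, given by its closed product formula
  (with Isabelle's total Gamma function on the complex numbers).\<close>
definition selberg :: "nat \<Rightarrow> complex \<Rightarrow> complex \<Rightarrow> complex \<Rightarrow> complex" where
  "selberg n \<alpha> \<beta> \<gamma> =
     (\<Prod>j<n. Gamma (\<alpha> + of_nat j * \<gamma>) * Gamma (\<beta> + of_nat j * \<gamma>)
               * Gamma (1 + of_nat (j + 1) * \<gamma>)
             / (Gamma (\<alpha> + \<beta> + (of_nat n + of_nat j - 1) * \<gamma>) * Gamma (1 + \<gamma>)))"

text \<open>The prefactor A, with n = 2 l and q = exp(i pi rho). All exponents of q are integers:
  q^(2(l-k+1)) = q^(n-2k+2), q^(-2l) = q^(-n).\<close>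
definition A_pref :: "nat \<Rightarrow> complex \<Rightarrow> complex" where
  "A_pref n q =
     (\<Prod>k=1..n. (1 - q ^ (2 * k)) * (q powi (int n - 2 * int k + 2) - q powi (- int n))
                 / (1 - q ^ 2))"

end

theory Submission
  imports Defs
begin

text \<open>With \<open>q = exp(i\<pi>\<rho>)\<close> and \<open>s\<^sub>m = q\<^sup>m - q\<^sup>-\<^sup>m = 2i sin(\<pi>m\<rho>)\<close>, the \<open>k\<close>-th factor of \<open>A\<close> is
  \<open>s\<^sub>k s\<^sub>n\<^sub>+\<^sub>1\<^sub>-\<^sub>k / s\<^sub>1\<close>, and for these parameters the \<open>k\<close>-th factor of the Selberg product
  collapses via \<open>\<Gamma>(z + 1) = z \<Gamma>(z)\<close> to \<open>k \<Gamma>((k+1)\<rho>-1) \<Gamma>(1-(n+1-k)\<rho>) / \<Gamma>(\<rho>)\<close>.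
  Reversing the order of the factors indexed by \<open>n+1-k\<close> regroups \<open>A \<sdot> S\<close> as a product
  over \<open>k\<close> in which the reflection formula \<open>s\<^sub>m = 2\<pi>i / (\<Gamma>(m\<rho>) \<Gamma>(1-m\<rho>))\<close> leaves exactly
  the right-hand side. This is valid unless some \<open>m\<rho>\<close> with \<open>1 \<le> m \<le> n\<close> is an integer,
  which happens only on a discrete set of \<open>\<rho>\<close>.\<close>

lemma sparse_in_multiples_in_Ints:
  assumes "m > 0"
  shows "{z::complex. of_nat m * z \<in> \<int>} sparse_in UNIV"
proof (rule uniform_discrete_imp_sparse, rule uniformI2[of "1 / real m"])
  show "0 < 1 / real m" using assms by simp
  fix x y :: complex
  assume "x \<in> {z. of_nat m * z \<in> \<int>}" "y \<in> {z. of_nat m * z \<in> \<int>}" "x \<noteq> y"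
  then obtain a b :: int where ab: "of_nat m * x = of_int a" "of_nat m * y = of_int b"
    by (auto elim!: Ints_cases)
  have "a \<noteq> b" using ab \<open>x \<noteq> y\<close> assms by (metis mult_cancel_left of_nat_eq_0_iff not_gr0)
  have "of_nat m * (x - y) = of_int (a - b)" using ab by (simp add: algebra_simps)
  hence "real m * norm (x - y) = \<bar>real_of_int (a - b)\<bar>"
    by (metis norm_mult norm_of_int norm_of_nat)
  moreover have "\<bar>real_of_int (a - b)\<bar> \<ge> 1" using \<open>a \<noteq> b\<close> by linarith
  ultimately have "real m * norm (x - y) \<ge> 1" by simp
  thus "1 / real m \<le> dist x y" using assms by (simp add: dist_norm field_simps)
qed

lemma sparse_in_some_multiple_in_Ints:
  "{z::complex. \<exists>m\<in>{1..n}. of_nat m * z \<in> \<int>} sparse_in UNIV"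
proof -
  have "{z::complex. \<exists>m\<in>{1..n}. of_nat m * z \<in> \<int>} = (\<Union>m\<in>{1..n}. {z. of_nat m * z \<in> \<int>})"
    by auto
  also have "\<dots> sparse_in UNIV"
    by (rule sparse_in_UN_finite) (auto intro: sparse_in_multiples_in_Ints)
  finally show ?thesis .
qed

lemma Gamma_reflection_exp:
  fixes z :: complex
  assumes "z \<notin> \<int>"
  shows "(exp (\<i> * pi * z) - exp (- (\<i> * pi * z))) * Gamma z * Gamma (1 - z) = 2 * pi * \<i>"
proof -
  have "sin (pi * z) \<noteq> 0"
  proof
    assume "sin (pi * z) = 0"
    then obtain k :: int where "pi * z = of_real (k * pi)" by (auto simp: sin_eq_0)
    hence "z = of_int k" by (simp add: field_simps)
    thus False using assms by auto
  qed
  moreover have "exp (\<i> * pi * z) - exp (- (\<i> * pi * z)) = 2 * \<i> * sin (pi * z)"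
    by (simp add: sin_exp_eq field_simps)
  ultimately show ?thesis using Gamma_reflection_complex[of z]
    by (simp add: field_simps)
qed

lemma A_pref_factor:
  fixes q :: complex
  assumes "q \<noteq> 0" "1 \<le> k" "k \<le> n"
  shows "(1 - q ^ (2 * k)) * (q powi (int n - 2 * int k + 2) - q powi (- int n)) / (1 - q ^ 2)
       = (q ^ k - inverse (q ^ k)) * (q ^ (n + 1 - k) - inverse (q ^ (n + 1 - k)))
           / (q - inverse q)"
proof -
  define a b where "a = k - 1" and "b = n - k"
  have k: "k = a + 1" and n: "n = a + b + 1"
    using assms(2,3) by (simp_all add: a_def b_def)
  have "int n - 2 * int k + 2 = int (b + 1) - int a" by (simp add: k n)
  hence e1: "q powi (int n - 2 * int k + 2) = q ^ (b + 1) / q ^ a"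
    using assms(1) by (metis power_int_diff power_int_of_nat)
  have e2: "q powi (- int n) = inverse (q ^ n)"
    by (subst power_int_minus, subst power_int_of_nat) (rule refl)
  show ?thesis
  proof (cases "1 - q ^ 2 = 0")
    case True
    then have "q - inverse q = 0" using assms(1) by (simp add: field_simps power2_eq_square)
    with True show ?thesis by simp
  next
    case False
    then have "q - inverse q \<noteq> 0" using assms(1) by (auto simp: field_simps power2_eq_square)
    with False show ?thesis using assms(1) unfolding e1 e2 unfolding k n
      by (simp add: field_simps power_add power2_eq_square power_mult)
  qed
qed

lemma A_pref_eq:
  fixes q :: complex
  assumes "q \<noteq> 0"
  shows "A_pref n q = (\<Prod>k=1..n. q ^ k - inverse (q ^ k)) ^ 2 / (q - inverse q) ^ n"
proof -
  define s where "s m = q ^ m - inverse (q ^ m)" for m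
  have "A_pref n q = (\<Prod>k=1..n. s k * s (n + 1 - k) / s 1)"
    unfolding A_pref_def s_def by (rule prod.cong) (use A_pref_factor[OF assms] in auto)
  also have "\<dots> = (\<Prod>k=1..n. s k) * (\<Prod>k=1..n. s (n + 1 - k)) / s 1 ^ n"
    by (simp add: prod_dividef prod.distrib)
  also have "(\<Prod>k=1..n. s (n + 1 - k)) = (\<Prod>k=1..n. s k)"
    using prod.atLeastAtMost_rev[of s 1 n] by simp
  finally show ?thesis by (simp add: s_def power2_eq_square)
qed

lemma selberg_special_eq:
  fixes \<rho> :: complex
  assumes "\<forall>k\<in>{1..n}. of_nat k * \<rho> \<notin> \<int>\<^sub>\<le>\<^sub>0" "n \<ge> 1"
  shows "selberg n (1 - of_nat n * \<rho>) (2 * \<rho> - 1) \<rho>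
       = (\<Prod>k=1..n. of_nat k * Gamma ((of_nat k + 1) * \<rho> - 1))
           * (\<Prod>k=1..n. Gamma (1 - of_nat k * \<rho>)) / Gamma \<rho> ^ n"
proof -
  define T where "T k = of_nat k * Gamma ((of_nat k + 1) * \<rho> - 1)" for k
  define R where "R k = Gamma (1 - of_nat k * \<rho>)" for k
  have \<rho>: "\<rho> \<notin> \<int>\<^sub>\<le>\<^sub>0" using bspec[OF assms(1), of 1] assms(2) by simp
  have "selberg n (1 - of_nat n * \<rho>) (2 * \<rho> - 1) \<rho> = (\<Prod>j<n. T (Suc j) * R (n - j) / Gamma \<rho>)"
    unfolding selberg_def
  proof (rule prod.cong[OF refl])
    fix j assume "j \<in> {..<n}"
    then have k: "of_nat (Suc j) * \<rho> \<notin> \<int>\<^sub>\<le>\<^sub>0" using bspec[OF assms(1), of "Suc j"] by simp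
    have e1: "1 - of_nat n * \<rho> + of_nat j * \<rho> = 1 - of_nat (n - j) * \<rho>"
      using \<open>j \<in> {..<n}\<close> by (simp add: of_nat_diff algebra_simps)
    have e2: "2 * \<rho> - 1 + of_nat j * \<rho> = (of_nat (Suc j) + 1) * \<rho> - 1"
      and e3: "1 - of_nat n * \<rho> + (2 * \<rho> - 1) + (of_nat n + of_nat j - 1) * \<rho> = of_nat (Suc j) * \<rho>"
      and e4: "1 + of_nat (j + 1) * \<rho> = of_nat (Suc j) * \<rho> + 1"
      by (simp_all add: algebra_simps)
    have g1: "Gamma (of_nat (Suc j) * \<rho> + 1) = of_nat (Suc j) * \<rho> * Gamma (of_nat (Suc j) * \<rho>)"
      using Gamma_plus1[OF k] .
    have g2: "Gamma (1 + \<rho>) = \<rho> * Gamma \<rho>"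
      using Gamma_plus1[OF \<rho>] by (simp add: add.commute)
    have "Gamma (of_nat (Suc j) * \<rho>) \<noteq> 0" "\<rho> \<noteq> 0"
      using k \<rho> by (auto simp: Gamma_eq_zero_iff)
    then show "Gamma (1 - of_nat n * \<rho> + of_nat j * \<rho>) * Gamma (2 * \<rho> - 1 + of_nat j * \<rho>)
        * Gamma (1 + of_nat (j + 1) * \<rho>)
        / (Gamma (1 - of_nat n * \<rho> + (2 * \<rho> - 1) + (of_nat n + of_nat j - 1) * \<rho>) * Gamma (1 + \<rho>))
        = T (Suc j) * R (n - j) / Gamma \<rho>"
      unfolding e1 e2 e3 e4 g1 g2 T_def R_def by (simp add: field_simps del: of_nat_Suc)
  qed
  also have "\<dots> = (\<Prod>k=1..n. T k * R (n + 1 - k) / Gamma \<rho>)"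
    by (simp add: prod.atLeast1_atMost_eq)
  also have "\<dots> = (\<Prod>k=1..n. T k) * (\<Prod>k=1..n. R (n + 1 - k)) / Gamma \<rho> ^ n"
    by (simp add: prod_dividef prod.distrib)
  also have "(\<Prod>k=1..n. R (n + 1 - k)) = (\<Prod>k=1..n. R k)"
    using prod.atLeastAtMost_rev[of R 1 n] by simp
  finally show ?thesis unfolding T_def R_def .
qed

lemma exp_pi_power_diff:
  "exp (\<i> * pi * \<rho>) ^ m - inverse (exp (\<i> * pi * \<rho>) ^ m)
     = exp (\<i> * pi * (of_nat m * \<rho>)) - exp (- (\<i> * pi * (of_nat m * \<rho>)))"
  by (simp add: exp_of_nat_mult[symmetric] exp_minus algebra_simps)

lemma Gamma_reflection_power:
  fixes \<rho> :: complex
  assumes "of_nat m * \<rho> \<notin> \<int>"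
  shows "exp (\<i> * pi * \<rho>) ^ m - inverse (exp (\<i> * pi * \<rho>) ^ m)
       = 2 * pi * \<i> / (Gamma (of_nat m * \<rho>) * Gamma (1 - of_nat m * \<rho>))"
proof -
  have "Gamma (of_nat m * \<rho>) \<noteq> 0" "Gamma (1 - of_nat m * \<rho>) \<noteq> 0"
    using assms nonpos_Ints_subset_Ints by (auto simp: Gamma_eq_zero_iff)
  with Gamma_reflection_exp[OF assms] show ?thesis
    unfolding exp_pi_power_diff by (simp add: field_simps)
qed

lemma paired_factor_eq:
  fixes \<rho> :: complex
  defines "q \<equiv> exp (\<i> * pi * \<rho>)"
  assumes k: "of_nat k * \<rho> \<notin> \<int>" and \<rho>: "\<rho> \<notin> \<int>"
  shows "(q ^ k - inverse (q ^ k)) ^ 2 / (q - inverse q)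
           * (of_nat k * Gamma ((of_nat k + 1) * \<rho> - 1) * Gamma (1 - of_nat k * \<rho>) / Gamma \<rho>)
       = 2 * pi * \<i> * (Gamma ((of_nat k + 1) * \<rho> - 1) * Gamma (- \<rho>)
           / ((Gamma (of_nat k * \<rho>)) ^ 2 * Gamma (- (of_nat k * \<rho>))))"
proof -
  have \<rho>1: "of_nat 1 * \<rho> \<notin> \<int>" using \<rho> by simp
  have "k \<noteq> 0" using k by (metis Ints_0 mult_zero_left of_nat_0)
  have "- (of_nat k * \<rho>) \<notin> \<int>\<^sub>\<le>\<^sub>0" "- \<rho> \<notin> \<int>\<^sub>\<le>\<^sub>0"
    using k \<rho> nonpos_Ints_subset_Ints by (auto simp: minus_in_Ints_iff)
  from this[THEN Gamma_plus1]
  have g1: "Gamma (1 - of_nat k * \<rho>) = - (of_nat k * \<rho>) * Gamma (- (of_nat k * \<rho>))"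
    and g2: "Gamma (1 - \<rho>) = - \<rho> * Gamma (- \<rho>)"
    by (simp_all add: add.commute)
  have "Gamma (of_nat k * \<rho>) \<noteq> 0" "Gamma (- (of_nat k * \<rho>)) \<noteq> 0" "Gamma \<rho> \<noteq> 0"
      "Gamma (- \<rho>) \<noteq> 0" "of_nat k * \<rho> \<noteq> 0" "\<rho> \<noteq> 0"
    using k \<rho> \<open>k \<noteq> 0\<close> nonpos_Ints_subset_Ints by (auto simp: Gamma_eq_zero_iff minus_in_Ints_iff)
  then show ?thesis
    unfolding q_def Gamma_reflection_power[OF k] Gamma_reflection_power[OF \<rho>1, simplified] g1 g2
    using pi_neq_zero by (simp add: field_simps power2_eq_square)
qed

lemma selberg_special_identity:
  fixes \<rho> :: complex
  assumes \<rho>: "\<forall>m\<in>{1..n}. of_nat m * \<rho> \<notin> \<int>" and "n \<ge> 1"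
  shows "A_pref n (exp (\<i> * pi * \<rho>)) * selberg n (1 - of_nat n * \<rho>) (2 * \<rho> - 1) \<rho>
       = (2 * pi * \<i>) ^ n
           * (\<Prod>k=1..n. Gamma ((of_nat k + 1) * \<rho> - 1) * Gamma (- \<rho>)
                           / ((Gamma (of_nat k * \<rho>)) ^ 2 * Gamma (- (of_nat k * \<rho>))))"
proof -
  define q where "q = exp (\<i> * pi * \<rho>)"
  define s where "s k = q ^ k - inverse (q ^ k)" for k
  define T where "T k = of_nat k * Gamma ((of_nat k + 1) * \<rho> - 1)" for k
  define R where "R k = Gamma (1 - of_nat k * \<rho>)" for k
  have nonpos: "\<forall>k\<in>{1..n}. of_nat k * \<rho> \<notin> \<int>\<^sub>\<le>\<^sub>0"
    using \<rho> nonpos_Ints_subset_Ints by blast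
  have "A_pref n q * selberg n (1 - of_nat n * \<rho>) (2 * \<rho> - 1) \<rho>
      = (\<Prod>k=1..n. s k) ^ 2 / s 1 ^ n * ((\<Prod>k=1..n. T k) * (\<Prod>k=1..n. R k) / Gamma \<rho> ^ n)"
    unfolding A_pref_eq[OF exp_not_eq_zero[of "\<i> * pi * \<rho>", folded q_def]]
      selberg_special_eq[OF nonpos \<open>n \<ge> 1\<close>] s_def T_def R_def by simp
  also have "\<dots> = (\<Prod>k=1..n. s k ^ 2 / s 1 * (T k * R k / Gamma \<rho>))"
    by (simp add: prod.distrib prod_dividef power_mult_distrib prod_power_distrib)
  also have "\<dots> = (\<Prod>k=1..n. 2 * pi * \<i> * (Gamma ((of_nat k + 1) * \<rho> - 1) * Gamma (- \<rho>)
                           / ((Gamma (of_nat k * \<rho>)) ^ 2 * Gamma (- (of_nat k * \<rho>)))))"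
  proof (rule prod.cong[OF refl])
    fix k assume "k \<in> {1..n}"
    then show "s k ^ 2 / s 1 * (T k * R k / Gamma \<rho>) = 2 * pi * \<i>
        * (Gamma ((of_nat k + 1) * \<rho> - 1) * Gamma (- \<rho>)
           / ((Gamma (of_nat k * \<rho>)) ^ 2 * Gamma (- (of_nat k * \<rho>))))"
      using paired_factor_eq[of k \<rho>] \<rho> bspec[OF \<rho>, of 1] \<open>n \<ge> 1\<close>
      unfolding s_def T_def R_def q_def by (simp add: mult.assoc)
  qed
  also have "\<dots> = (2 * pi * \<i>) ^ n
      * (\<Prod>k=1..n. Gamma ((of_nat k + 1) * \<rho> - 1) * Gamma (- \<rho>)
                      / ((Gamma (of_nat k * \<rho>)) ^ 2 * Gamma (- (of_nat k * \<rho>))))"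
    by (simp only: prod.distrib prod_constant card_atLeastAtMost diff_Suc_1 power_mult_distrib)
  finally show ?thesis unfolding q_def .
qed

theorem mainTheorem4:
  fixes n :: nat
  assumes "n \<ge> 1"
  shows "\<forall>\<^sub>\<approx>\<rho>::complex.
    A_pref n (exp (\<i> * of_real pi * \<rho>)) / of_nat (fact n)
      * selberg n (1 - of_nat n * \<rho>) (2 * \<rho> - 1) \<rho>
    = (2 * of_real pi * \<i>) ^ n / of_nat (fact n)
      * (\<Prod>k=1..n. Gamma ((of_nat k + 1) * \<rho> - 1) * Gamma (- \<rho>)
                    / ((Gamma (of_nat k * \<rho>)) ^ 2 * Gamma (- (of_nat k * \<rho>))))"
  unfolding eventually_cosparse
  by (rule sparse_in_subset2[OF sparse_in_some_multiple_in_Ints[of n]])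
     (use selberg_special_identity[OF _ assms] in \<open>auto simp: times_divide_eq_left\<close>)

end
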